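(* Let $T\ge 1$ be an integer and $M>0$. For integers $A\le B$, $[A,B]$ denotes the discrete interval $\{A,A+1,\dots,B\}$, and $C([A,B],\mathbb{R})$ the set of real functions on $[A,B]$ with norm $\|u\|_C=\max_{k\in[A,B]}|u(k)|$. Let $L_M=\{u\in C([1,T],\mathbb{R}):\|u\|_C\le M\}$. $\Delta$ is the forward difference, $\Delta x(k)=x(k+1)-x(k)$. $E$ is the space of functions $y:[0,T+1]\to\mathbb{R}$ with $y(0)=y(T+1)=0$, normed by $\|y\|=\big(\sum_{k=1}^{T}(\Delta y(k))^2\big)^{1/2}$. For $u\in L_M$ consider the boundary value problem $$\Delta\big(p(k)\Delta x(k-1)\big)+f\big(k,x(k),u(k)\big)=g(k),\quad k\in[1,T],\qquad x(0)=x(T+1)=0. \tag{P$_u$}$$ Let $F(k,y,u)=\int_0^{y}f(k,t,u)\,dt$ and define $J_u:E\to\mathbb{R}$ by $$J_u(y)=\sum_{k=1}^{T+1}\frac{p(k)}{2}\big(\Delta y(k-1)\big)^2-\sum_{k=1}^{T}F\big(k,y(k),u(k)\big)+\sum_{k=1}^{T}g(k)y(k),$$ and $V_u=\{x\in E: J_u(x)=\inf_{v\in E}J_u(v)\text{ and }\tfrac{d}{dx}J_u(x)=0\}$. A positive solution of (P$_u$) is an $x\in E$ satisfying (P$_u$) with $x(k)>0$ for all $k\in[1,T]$. Consider the assumptions: (A1) $f(k,\cdot,\cdot)$ is continuous on $\mathbb{R}\times[-M,M]$ for each $k\in[1,T]$; $p\in C([1,T+1],\mathbb{R})$; $g\in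 C([1,T],\mathbb{R})$. (A2) There is $\alpha>0$ with $y\,f(k,y,u)\le 0$ for all $|y|\ge\alpha$, $|u|\le M$, $k\in[1,T]$. (A3) $m=\min_{k\in[1,T+1]}p(k)>0$. (A5) $f(k,y,u)-g(k)\ge 0$ for all $k\in[1,T]$, $y\in\mathbb{R}$, $|u|\le M$; and there is $k_1\in[1,T]$ with $f(k_1,y,u)-g(k_1)>0$ for all $y\in\mathbb{R}$, $|u|\le M$. (A6) $\lim_{y\to\infty}\sum_{k=1}^{T}F(k,y,u)=-\infty$ and $\lim_{y\to-\infty}\sum_{k=1}^{T}F(k,y,u)=c\in\mathbb{R}$, uniformly in $|u|\le M$. Assume either (A1), (A2), (A3), (A5) or (A1), (A3), (A5), (A6). Then for any fixed $u\in L_M$ there exists at least one solution $x\in V_u$ of (P$_u$) with $x(k)>0$ for $k\in[1,T]$ and $J_u(x)=\inf_{y\in E}J_u(y)$. Moreover, let $\{u_n\}\subset L_M$ converge to $\bar u\in L_M$. For any sequence $\{x_n\}$ of positive solutions $x_n\in V_{u_n}$ of (P$_{u_n}$), there exist a subsequence $\{x_{n_i}\}\subset E$ and $\bar x\in E$ such that $x_{n_i}\to\bar x$, $J_{\bar u}(\bar x)=\inf_{y\in E}J_{\bar u}(y)$, $\bar x(k)>0$ for $k\in[1,T]$, and $\bar x$ satisfies (P$_{\bar u}$).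
   Context: Discrete second-order Dirichlet boundary value problem depending on a functional parameter $u\in L_M$, studied variationally via the coercive action functional $J_u$; $V_u$ is the set of minimizers (critical points) of $J_u$. *)

theory Defs
  imports "HOL-Analysis.Analysis"
begin

text \<open>Functions on discrete intervals are modelled as nat \<Rightarrow> real; only the
values on the relevant interval matter.\<close>

definition normC :: "nat \<Rightarrow> (nat \<Rightarrow> real) \<Rightarrow> real" where
  "normC T u = Max ((\<lambda>k. \<bar>u k\<bar>) ` {1..T})"

definition LM :: "nat \<Rightarrow> real \<Rightarrow> (nat \<Rightarrow> real) set" where
  "LM T M = {u. normC T u \<le> M}"

definition Espace :: "nat \<Rightarrow> (nat \<Rightarrow> real) set" where
  "Espace T = {y. y 0 = 0 \<and> y (T + 1) = 0}"

definition normE :: "nat \<Rightarrow> (nat \<Rightarrow> real) \<Rightarrow> real" where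
  "normE T y = sqrt (\<Sum>k=1..T. (y (k + 1) - y k)\<^sup>2)"

definition Fint :: "(nat \<Rightarrow> real \<Rightarrow> real \<Rightarrow> real) \<Rightarrow> nat \<Rightarrow> real \<Rightarrow> real \<Rightarrow> real" where
  "Fint f k y u = (if 0 \<le> y then integral {0..y} (\<lambda>t. f k t u)
                   else - integral {y..0} (\<lambda>t. f k t u))"

definition Jfun :: "nat \<Rightarrow> (nat \<Rightarrow> real) \<Rightarrow> (nat \<Rightarrow> real \<Rightarrow> real \<Rightarrow> real) \<Rightarrow> (nat \<Rightarrow> real)
                    \<Rightarrow> (nat \<Rightarrow> real) \<Rightarrow> (nat \<Rightarrow> real) \<Rightarrow> real" where
  "Jfun T p f g u y =
     (\<Sum>k=1..T+1. p k / 2 * (y k - y (k - 1))\<^sup>2)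
     - (\<Sum>k=1..T. Fint f k (y k) (u k))
     + (\<Sum>k=1..T. g k * y k)"

definition Vset :: "nat \<Rightarrow> (nat \<Rightarrow> real) \<Rightarrow> (nat \<Rightarrow> real \<Rightarrow> real \<Rightarrow> real) \<Rightarrow> (nat \<Rightarrow> real)
                    \<Rightarrow> (nat \<Rightarrow> real) \<Rightarrow> (nat \<Rightarrow> real) set" where
  "Vset T p f g u = {x \<in> Espace T.
      (\<forall>v \<in> Espace T. Jfun T p f g u x \<le> Jfun T p f g u v) \<and>
      (\<forall>h \<in> Espace T. ((\<lambda>t. Jfun T p f g u (\<lambda>k. x k + t * h k)) has_real_derivative 0) (at 0))}"

definition solvesP :: "nat \<Rightarrow> (nat \<Rightarrow> real) \<Rightarrow> (nat \<Rightarrow> real \<Rightarrow> real \<Rightarrow> real) \<Rightarrow> (nat \<Rightarrow> real)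
                    \<Rightarrow> (nat \<Rightarrow> real) \<Rightarrow> (nat \<Rightarrow> real) \<Rightarrow> bool" where
  "solvesP T p f g u x \<longleftrightarrow> x \<in> Espace T \<and>
     (\<forall>k \<in> {1..T}. p (k + 1) * (x (k + 1) - x k) - p k * (x k - x (k - 1))
                    + f k (x k) (u k) = g k)"

end

theory Submission
  imports Defs
begin

text \<open>By (A5) each map y \<mapsto> F(k,y,u) - g(k) y is nondecreasing and vanishes at 0, so
  together with (A2), or with the first half of (A6), it is bounded above by a + b|y| uniformly
  in k and |u| \<le> M. Since the quadratic part of J_u is at least m |y(k)|^2 / (2T), the sublevel set
  {J_u \<le> 0 = J_u(0)} lies in a box [-R,R]^T that does not depend on u, and J_u attains its
  minimum there. At a minimizer the derivative of J_u vanishes in every direction; testing with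
  the unit vectors gives (P_u). For a solution the discrete Laplacian of x is \<le> 0 by (A5); if x(k) \<le> 0
  somewhere, the minimum of x over [0,T+1] is attained in the interior, which forces x to be
  constant, hence 0, contradicting the strict inequality at k1. For u_n \<rightarrow> ubar the minimizers x_n stay in the same box, a subsequence
  converges, and since J_u(y) is jointly continuous in (u,y) the limit minimizes J_ubar.\<close>

section \<open>Oriented primitives\<close>

definition primitive :: "(real \<Rightarrow> real) \<Rightarrow> real \<Rightarrow> real" where
  "primitive \<phi> z = (if 0 \<le> z then integral {0..z} \<phi> else - integral {z..0} \<phi>)"

lemma Fint_eq_primitive: "Fint f k y u = primitive (\<lambda>t. f k t u) y"
  by (simp add: Fint_def primitive_def)

lemma primitive_0 [simp]: "primitive \<phi> 0 = 0"
  by (simp add: primitive_def)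

lemma primitive_eq_integral_diff:
  fixes \<phi> :: "real \<Rightarrow> real"
  assumes \<phi>: "continuous_on UNIV \<phi>" and "-L \<le> z" and "0 \<le> L"
  shows "primitive \<phi> z = integral {-L..z} \<phi> - integral {-L..0} \<phi>"
proof (cases "0 \<le> z")
  case True
  have "integral {-L..0} \<phi> + integral {0..z} \<phi> = integral {-L..z} \<phi>"
    using True assms
    by (intro Henstock_Kurzweil_Integration.integral_combine integrable_continuous_real
        continuous_on_subset[OF \<phi>]) auto
  then show ?thesis using True by (simp add: primitive_def)
next
  case False
  have "integral {-L..z} \<phi> + integral {z..0} \<phi> = integral {-L..0} \<phi>"
    using False assms
    by (intro Henstock_Kurzweil_Integration.integral_combine integrable_continuous_real
        continuous_on_subset[OF \<phi>]) auto
  then show ?thesis using False by (simp add: primitive_def)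
qed

lemma has_real_derivative_primitive:
  assumes \<phi>: "continuous_on UNIV \<phi>"
  shows "(primitive \<phi> has_real_derivative \<phi> y) (at y)"
proof -
  define L where "L = \<bar>y\<bar> + 1"
  have L: "0 \<le> L" "-L < y" "y < L" unfolding L_def by auto
  have "((\<lambda>z. integral {-L..z} \<phi>) has_real_derivative \<phi> y) (at y within {-L..L})"
    using L by (intro integral_has_real_derivative continuous_on_subset[OF \<phi>]) auto
  moreover have "at y within {-L..L} = at y" using L by (intro at_within_Icc_at) auto
  ultimately have "((\<lambda>z. integral {-L..z} \<phi> - integral {-L..0} \<phi>) has_real_derivative \<phi> y) (at y)"
    by (auto intro!: derivative_eq_intros)
  then show ?thesis
    by (rule has_field_derivative_transform_within_open[of _ _ _ "{-L<..}"])
       (use L primitive_eq_integral_diff[OF \<phi>, of L] in auto)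
qed

lemma primitive_lipschitz:
  assumes \<phi>: "continuous_on UNIV \<phi>"
    and bound: "\<And>t. min y z \<le> t \<Longrightarrow> t \<le> max y z \<Longrightarrow> \<bar>\<phi> t\<bar> \<le> C"
  shows "\<bar>primitive \<phi> y - primitive \<phi> z\<bar> \<le> C * \<bar>y - z\<bar>"
proof -
  have "norm (primitive \<phi> y - primitive \<phi> z) \<le> C * norm (y - z)"
  proof (rule field_differentiable_bound[of "{min y z..max y z}"])
    show "(primitive \<phi> has_field_derivative \<phi> t) (at t within {min y z..max y z})" for t
      by (rule has_field_derivative_at_within[OF has_real_derivative_primitive[OF \<phi>]])
    show "norm (\<phi> t) \<le> C" if "t \<in> {min y z..max y z}" for t
      using bound that by simp
  qed auto
  then show ?thesis by simp
qed

lemma primitive_minus_linear_mono: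
  assumes \<phi>: "continuous_on UNIV \<phi>" and ge: "\<And>t. c \<le> \<phi> t"
  shows "mono (\<lambda>y. primitive \<phi> y - c * y)"
proof (rule monoI, rule DERIV_nonneg_imp_nondecreasing[where f="\<lambda>y. primitive \<phi> y - c * y"])
  show "\<exists>d. ((\<lambda>y. primitive \<phi> y - c * y) has_real_derivative d) (at t) \<and> 0 \<le> d" for t
    using ge[of t] by (auto intro!: derivative_eq_intros has_real_derivative_primitive[OF \<phi>])
qed

lemma primitive_le_if_nonpos_tail:
  assumes \<phi>: "continuous_on UNIV \<phi>" and "0 \<le> C" and "0 \<le> \<alpha>" and y: "0 \<le> y"
    and bound: "\<And>t. 0 \<le> t \<Longrightarrow> t \<le> \<alpha> \<Longrightarrow> \<phi> t \<le> C"
    and tail: "\<And>t. \<alpha> \<le> t \<Longrightarrow> \<phi> t \<le> 0"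
  shows "primitive \<phi> y \<le> C * \<alpha>"
proof -
  have head: "primitive \<phi> z \<le> C * \<alpha>" if "0 \<le> z" "z \<le> \<alpha>" for z
  proof -
    have "primitive \<phi> z = integral {0..z} \<phi>" using that by (simp add: primitive_def)
    also have "\<dots> \<le> integral {0..z} (\<lambda>_. C)"
      using that
      by (intro integral_le integrable_continuous_real continuous_on_subset[OF \<phi>] bound) auto
    also have "\<dots> = C * z" using that by simp
    also have "\<dots> \<le> C * \<alpha>" using that \<open>0 \<le> C\<close> by (intro mult_left_mono)
    finally show ?thesis .
  qed
  show ?thesis
  proof (cases "y \<le> \<alpha>")
    case False
    have "primitive \<phi> y \<le> primitive \<phi> \<alpha>"
    proof (rule DERIV_nonpos_imp_nonincreasing[where f="primitive \<phi>"])
      show "\<exists>d. (primitive \<phi> has_real_derivative d) (at t) \<and> d \<le> 0" if "\<alpha> \<le> t" for t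
        using has_real_derivative_primitive[OF \<phi>, of t] tail[OF that] by blast
    qed (use False in simp)
    with head[of \<alpha>] \<open>0 \<le> \<alpha>\<close> show ?thesis by linarith
  qed (use head y in auto)
qed

lemma continuous_on_slice:
  assumes f: "continuous_on (UNIV \<times> U) (\<lambda>(y, u). f y u)" and u: "u \<in> U"
  shows "continuous_on UNIV (\<lambda>t. f t u)"
proof -
  have "continuous_on UNIV (\<lambda>t. (t, u))" by (intro continuous_intros)
  moreover have "range (\<lambda>t. (t, u)) \<subseteq> UNIV \<times> U" using u by auto
  ultimately show ?thesis using continuous_on_compose2[OF f] by fastforce
qed

lemma continuous_on_primitive_param:
  fixes f :: "real \<Rightarrow> 'u::topological_space \<Rightarrow> real"
  assumes f: "continuous_on (UNIV \<times> U) (\<lambda>(y, u). f y u)"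
  shows "continuous_on U (\<lambda>u. primitive (\<lambda>t. f t u) y)"
proof -
  have integral: "continuous_on U (\<lambda>u. integral (cbox a b) (\<lambda>t. f t u))" for a b :: real
  proof (rule integral_continuous_on_param)
    have swap: "continuous_on (U \<times> cbox a b) (\<lambda>x. (snd x, fst x))" by (intro continuous_intros)
    have "(\<lambda>x. (snd x, fst x)) ` (U \<times> cbox a b) \<subseteq> UNIV \<times> U" by auto
    from continuous_on_compose2[OF f swap this]
    show "continuous_on (U \<times> cbox a b) (\<lambda>(u, t). f t u)" by (simp add: case_prod_unfold)
  qed
  show ?thesis
    using integral[of 0 y] continuous_on_minus[OF integral[of y 0]]
    by (cases "0 \<le> y") (simp_all add: primitive_def)
qed

lemma primitive_tendsto:
  fixes f :: "real \<Rightarrow> 'u::metric_space \<Rightarrow> real"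
  assumes f: "continuous_on (UNIV \<times> U) (\<lambda>(y, u). f y u)" and "compact U"
    and y: "Y \<longlonglongrightarrow> y" and u: "X \<longlonglongrightarrow> u" and "\<And>n. X n \<in> U" and "u \<in> U"
  shows "(\<lambda>n. primitive (\<lambda>t. f t (X n)) (Y n)) \<longlonglongrightarrow> primitive (\<lambda>t. f t u) y"
proof -
  define L where "L = \<bar>y\<bar> + 1"
  have "compact ({-L..L} \<times> U)" using \<open>compact U\<close> by (intro compact_Times) auto
  moreover have "continuous_on ({-L..L} \<times> U) (\<lambda>(t, v). f t v)"
    using f by (rule continuous_on_subset) auto
  ultimately obtain C where C: "\<And>t v. t \<in> {-L..L} \<Longrightarrow> v \<in> U \<Longrightarrow> \<bar>f t v\<bar> \<le> C"
    by (rule continuous_on_compact_bound) (auto intro: that)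
  have "(\<lambda>n. primitive (\<lambda>t. f t (X n)) (Y n) - primitive (\<lambda>t. f t (X n)) y) \<longlonglongrightarrow> 0"
  proof (rule Lim_null_comparison)
    have "\<forall>\<^sub>F n in sequentially. dist (Y n) y < 1" using y by (rule tendstoD) simp
    then show "\<forall>\<^sub>F n in sequentially.
        norm (primitive (\<lambda>t. f t (X n)) (Y n) - primitive (\<lambda>t. f t (X n)) y) \<le> C * \<bar>Y n - y\<bar>"
    proof eventually_elim
      case (elim n)
      have "\<bar>primitive (\<lambda>t. f t (X n)) (Y n) - primitive (\<lambda>t. f t (X n)) y\<bar> \<le> C * \<bar>Y n - y\<bar>"
      proof (rule primitive_lipschitz[OF continuous_on_slice[OF f \<open>X n \<in> U\<close>]])
        fix t assume "min (Y n) y \<le> t" "t \<le> max (Y n) y"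
        with elim have "t \<in> {-L..L}" by (auto simp: L_def dist_real_def)
        then show "\<bar>f t (X n)\<bar> \<le> C" using C \<open>X n \<in> U\<close> by blast
      qed
      then show ?case by simp
    qed
    show "(\<lambda>n. C * \<bar>Y n - y\<bar>) \<longlonglongrightarrow> 0"
      using tendsto_mult_right_zero[OF tendsto_rabs_zero[OF LIM_zero[OF y]]] by simp
  qed
  moreover have "(\<lambda>n. primitive (\<lambda>t. f t (X n)) y) \<longlonglongrightarrow> primitive (\<lambda>t. f t u) y"
    using continuous_on_primitive_param[OF f] u assms(5,6)
    by (intro continuous_on_tendsto_compose[OF _ u] always_eventually) auto
  ultimately show ?thesis by (rule Lim_transform[rotated])
qed

section \<open>Linear growth of F(k,y,u) - g(k) y\<close>

lemma affine_bound_of_mono: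
  fixes H :: "real \<Rightarrow> real"
  assumes "mono H" "H 0 = 0" "0 \<le> Y" "0 \<le> B" and tail: "\<And>y. Y \<le> y \<Longrightarrow> H y \<le> A + B * y"
  shows "H y \<le> \<bar>A\<bar> + B * Y + B * \<bar>y\<bar>"
proof -
  consider "y \<le> 0" | "0 \<le> y" "y \<le> Y" | "Y \<le> y" by linarith
  then show ?thesis
  proof cases
    case 1
    then have "H y \<le> 0" using \<open>mono H\<close> \<open>H 0 = 0\<close> by (metis monoD)
    then show ?thesis using assms(3,4) by (smt (verit) mult_nonneg_nonneg abs_ge_zero)
  next
    case 2
    then have "H y \<le> A + B * Y" using \<open>mono H\<close> tail[of Y] by (metis monoD order_refl order_trans)
    then show ?thesis using assms(4) by (smt (verit) mult_nonneg_nonneg abs_ge_zero)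
  next
    case 3
    then show ?thesis using tail[OF 3] assms(3,4) by (smt (verit) mult_nonneg_nonneg abs_ge_zero)
  qed
qed

lemma uniform_affine_bound_finite:
  fixes H :: "'k \<Rightarrow> 'u \<Rightarrow> real \<Rightarrow> real"
  assumes "finite K"
    and mono: "\<And>k u. k \<in> K \<Longrightarrow> u \<in> U \<Longrightarrow> mono (H k u)"
    and zero: "\<And>k u. k \<in> K \<Longrightarrow> u \<in> U \<Longrightarrow> H k u 0 = 0"
    and tail: "\<And>k. k \<in> K \<Longrightarrow> \<exists>A B Y. 0 \<le> B \<and> 0 \<le> Y \<and> (\<forall>u\<in>U. \<forall>y\<ge>Y. H k u y \<le> A + B * y)"
  shows "\<exists>a b. 0 \<le> a \<and> 0 \<le> b \<and> (\<forall>k\<in>K. \<forall>u\<in>U. \<forall>y. H k u y \<le> a + b * \<bar>y\<bar>)"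
proof -
  obtain A B Y where B: "\<And>k. k \<in> K \<Longrightarrow> 0 \<le> B k" and Y: "\<And>k. k \<in> K \<Longrightarrow> 0 \<le> Y k"
    and AB: "\<And>k u y. k \<in> K \<Longrightarrow> u \<in> U \<Longrightarrow> Y k \<le> y \<Longrightarrow> H k u y \<le> A k + B k * y"
    using tail by metis
  define a where "a = (\<Sum>k\<in>K. \<bar>A k\<bar> + B k * Y k)"
  define b where "b = (\<Sum>k\<in>K. B k)"
  have "H k u y \<le> a + b * \<bar>y\<bar>" if k: "k \<in> K" and u: "u \<in> U" for k u y
  proof -
    have "H k u y \<le> \<bar>A k\<bar> + B k * Y k + B k * \<bar>y\<bar>"
      using affine_bound_of_mono[OF mono[OF k u] zero[OF k u] Y[OF k] B[OF k]] AB[OF k u] by blast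
    moreover have "\<bar>A k\<bar> + B k * Y k \<le> a"
      unfolding a_def using k B Y \<open>finite K\<close> by (intro member_le_sum) auto
    moreover have "B k * \<bar>y\<bar> \<le> b * \<bar>y\<bar>"
      unfolding b_def using k B \<open>finite K\<close> by (intro mult_right_mono member_le_sum) auto
    ultimately show ?thesis by linarith
  qed
  moreover have "0 \<le> a" "0 \<le> b" unfolding a_def b_def using B Y by (auto intro!: sum_nonneg)
  ultimately show ?thesis by blast
qed

lemma primitive_bounded_above_if_nonpos_tail:
  fixes f :: "real \<Rightarrow> 'u::topological_space \<Rightarrow> real"
  assumes f: "continuous_on (UNIV \<times> U) (\<lambda>(y, u). f y u)" and "compact U" and "0 < \<alpha>"
    and tail: "\<And>t u. u \<in> U \<Longrightarrow> \<alpha> \<le> t \<Longrightarrow> t * f t u \<le> 0"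
  shows "\<exists>A. \<forall>u\<in>U. \<forall>y\<ge>0. primitive (\<lambda>t. f t u) y \<le> A"
proof -
  have "compact ({0..\<alpha>} \<times> U)" using \<open>compact U\<close> by (intro compact_Times) auto
  moreover have "continuous_on ({0..\<alpha>} \<times> U) (\<lambda>(t, u). f t u)"
    using f by (rule continuous_on_subset) auto
  ultimately obtain C where "0 \<le> C" and C: "\<And>t u. t \<in> {0..\<alpha>} \<Longrightarrow> u \<in> U \<Longrightarrow> \<bar>f t u\<bar> \<le> C"
    by (rule continuous_on_compact_bound) auto
  have "primitive (\<lambda>t. f t u) y \<le> C * \<alpha>" if "u \<in> U" "0 \<le> y" for u y
  proof (rule primitive_le_if_nonpos_tail[OF continuous_on_slice[OF f \<open>u \<in> U\<close>] \<open>0 \<le> C\<close>])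
    show "f t u \<le> C" if "0 \<le> t" "t \<le> \<alpha>" for t
      using C[of t u] that \<open>u \<in> U\<close> by simp
    show "f t u \<le> 0" if "\<alpha> \<le> t" for t
      using tail[OF \<open>u \<in> U\<close> that] that \<open>0 < \<alpha>\<close> by (simp add: mult_le_0_iff)
  qed (use \<open>0 < \<alpha>\<close> that in auto)
  then show ?thesis by blast
qed

lemma Fint_minus_linear_mono:
  assumes "continuous_on UNIV (\<lambda>t. f k t u)" and "\<And>t. g k \<le> f k t u"
  shows "mono (\<lambda>y. Fint f k y u - g k * y)"
  unfolding Fint_eq_primitive by (rule primitive_minus_linear_mono[OF assms])

lemma Fint_tail_bound_of_sign_condition:
  assumes A1: "continuous_on (UNIV \<times> {-M..M}) (\<lambda>(y, u). f k y u)" and "0 < \<alpha>"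
    and A2: "\<forall>y u. \<bar>y\<bar> \<ge> \<alpha> \<and> \<bar>u\<bar> \<le> M \<longrightarrow> y * f k y u \<le> 0"
  shows "\<exists>A B Y. 0 \<le> B \<and> 0 \<le> Y \<and> (\<forall>u\<in>{-M..M}. \<forall>y\<ge>Y. Fint f k y u - g k * y \<le> A + B * y)"
proof -
  obtain A where A: "\<forall>u\<in>{-M..M}. \<forall>y\<ge>0. primitive (\<lambda>t. f k t u) y \<le> A"
    using primitive_bounded_above_if_nonpos_tail[where f="f k" and U="{-M..M}", OF A1 _ \<open>0 < \<alpha>\<close>] A2
    by (force simp: abs_le_iff)
  have "Fint f k y u - g k * y \<le> A + \<bar>g k\<bar> * y" if "u \<in> {-M..M}" "0 \<le> y" for u y
  proof -
    have "- g k * y \<le> \<bar>g k\<bar> * y" using \<open>0 \<le> y\<close> by (intro mult_right_mono) auto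
    then show ?thesis using A that by (force simp: Fint_eq_primitive)
  qed
  then show ?thesis by (intro exI[of _ A] exI[of _ "\<bar>g k\<bar>"] exI[of _ 0]) auto
qed

lemma Fint_tail_bound_of_sum_bound:
  assumes mono: "\<And>j u. j \<in> {1..T} \<Longrightarrow> u \<in> {-M..M} \<Longrightarrow> mono (\<lambda>y. Fint f j y u - g j * y)"
    and Y: "\<forall>y \<ge> Y. \<forall>u. \<bar>u\<bar> \<le> M \<longrightarrow> (\<Sum>k=1..T. Fint f k y u) \<le> 0" and k: "k \<in> {1..T}"
  shows "\<exists>A B Y. 0 \<le> B \<and> 0 \<le> Y \<and> (\<forall>u\<in>{-M..M}. \<forall>y\<ge>Y. Fint f k y u - g k * y \<le> A + B * y)"
proof -
  define G where "G = \<bar>\<Sum>j=1..T. g j\<bar>"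
  have "Fint f k y u - g k * y \<le> G * y" if u: "u \<in> {-M..M}" and y: "max Y 0 \<le> y" for u y
  proof -
    have "0 \<le> Fint f j y u - g j * y" if "j \<in> {1..T}" for j
      using monoD[OF mono[OF that u], of 0 y] y by (simp add: Fint_eq_primitive)
    then have "Fint f k y u - g k * y \<le> (\<Sum>j=1..T. Fint f j y u - g j * y)"
      using k by (intro member_le_sum) auto
    also have "\<dots> = (\<Sum>j=1..T. Fint f j y u) - (\<Sum>j=1..T. g j) * y"
      by (simp add: sum_subtractf sum_distrib_right)
    also have "\<dots> \<le> - (\<Sum>j=1..T. g j) * y" using Y u y by (auto simp: abs_le_iff)
    also have "\<dots> \<le> G * y" unfolding G_def using y by (intro mult_right_mono) auto
    finally show ?thesis .
  qed
  then show ?thesis by (intro exI[of _ 0] exI[of _ G] exI[of _ "max Y 0"]) (auto simp: G_def)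
qed

lemma Fint_minus_linear_growth:
  assumes A1: "\<forall>k \<in> {1..T}. continuous_on (UNIV \<times> {-M..M}) (\<lambda>(y, u). f k y u)"
    and A5: "\<forall>k \<in> {1..T}. \<forall>y u. \<bar>u\<bar> \<le> M \<longrightarrow> f k y u - g k \<ge> 0"
    and A2_or_A6:
      "(\<exists>\<alpha>>0. \<forall>k \<in> {1..T}. \<forall>y u. \<bar>y\<bar> \<ge> \<alpha> \<and> \<bar>u\<bar> \<le> M \<longrightarrow> y * f k y u \<le> 0)
       \<or> ((\<forall>B. \<exists>Y. \<forall>y \<ge> Y. \<forall>u. \<bar>u\<bar> \<le> M \<longrightarrow> (\<Sum>k=1..T. Fint f k y u) \<le> B)
          \<and> (\<exists>c. \<forall>\<epsilon>>0. \<exists>Y. \<forall>y \<le> Y. \<forall>u. \<bar>u\<bar> \<le> M \<longrightarrow>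
                 \<bar>(\<Sum>k=1..T. Fint f k y u) - c\<bar> < \<epsilon>))"
  shows "\<exists>a b. 0 \<le> a \<and> 0 \<le> b \<and>
           (\<forall>k\<in>{1..T}. \<forall>u\<in>{-M..M}. \<forall>y. Fint f k y u - g k * y \<le> a + b * \<bar>y\<bar>)"
proof -
  have mono: "mono (\<lambda>y. Fint f k y u - g k * y)" if "k \<in> {1..T}" "u \<in> {-M..M}" for k u
    using A1 A5 that
    by (intro Fint_minus_linear_mono continuous_on_slice[where U="{-M..M}"]) (auto simp: abs_le_iff)
  consider (A2) \<alpha> where "0 < \<alpha>" "\<forall>k \<in> {1..T}. \<forall>y u. \<bar>y\<bar> \<ge> \<alpha> \<and> \<bar>u\<bar> \<le> M \<longrightarrow> y * f k y u \<le> 0"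
    | (A6) Y where "\<forall>y \<ge> Y. \<forall>u. \<bar>u\<bar> \<le> M \<longrightarrow> (\<Sum>k=1..T. Fint f k y u) \<le> 0"
    using A2_or_A6 by blast
  then have "\<exists>A B Y. 0 \<le> B \<and> 0 \<le> Y \<and> (\<forall>u\<in>{-M..M}. \<forall>y\<ge>Y. Fint f k y u - g k * y \<le> A + B * y)"
    if "k \<in> {1..T}" for k
  proof cases
    case A2
    then show ?thesis using A1 that by (intro Fint_tail_bound_of_sign_condition) auto
  next
    case A6
    then show ?thesis using mono that by (intro Fint_tail_bound_of_sum_bound) auto
  qed
  then show ?thesis
    using uniform_affine_bound_finite[of "{1..T}" "{-M..M}" "\<lambda>k u y. Fint f k y u - g k * y"] mono
    by (simp add: Fint_eq_primitive)
qed

section \<open>Critical points of J\<close>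

definition Jfun_deriv :: "nat \<Rightarrow> (nat \<Rightarrow> real) \<Rightarrow> (nat \<Rightarrow> real \<Rightarrow> real \<Rightarrow> real) \<Rightarrow> (nat \<Rightarrow> real)
    \<Rightarrow> (nat \<Rightarrow> real) \<Rightarrow> (nat \<Rightarrow> real) \<Rightarrow> (nat \<Rightarrow> real) \<Rightarrow> real" where
  "Jfun_deriv T p f g u x h =
     (\<Sum>k=1..T+1. p k * (x k - x (k - 1)) * (h k - h (k - 1)))
     - (\<Sum>k=1..T. f k (x k) (u k) * h k)
     + (\<Sum>k=1..T. g k * h k)"

lemma has_real_derivative_Jfun_line:
  assumes "\<forall>k\<in>{1..T}. continuous_on UNIV (\<lambda>t. f k t (u k))"
  shows "((\<lambda>t. Jfun T p f g u (\<lambda>k. x k + t * h k))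
           has_real_derivative Jfun_deriv T p f g u x h) (at 0)"
proof -
  have quadratic: "((\<lambda>t. p k / 2 * ((x k + t * h k) - (x (k - 1) + t * h (k - 1)))\<^sup>2)
      has_real_derivative p k * (x k - x (k - 1)) * (h k - h (k - 1))) (at 0)" for k
  proof -
    have "(\<lambda>t. p k / 2 * ((x k + t * h k) - (x (k - 1) + t * h (k - 1)))\<^sup>2)
        = (\<lambda>t. p k / 2 * ((x k - x (k - 1)) + t * (h k - h (k - 1)))\<^sup>2)"
      by (simp add: algebra_simps)
    then show ?thesis by (auto intro!: derivative_eq_intros)
  qed
  have potential:
    "((\<lambda>t. Fint f k (x k + t * h k) (u k)) has_real_derivative f k (x k) (u k) * h k) (at 0)"
    if "k \<in> {1..T}" for k
  proof -
    have "(primitive (\<lambda>t. f k t (u k)) has_real_derivative f k (x k) (u k)) (at (x k + 0 * h k))"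
      using has_real_derivative_primitive[of "\<lambda>t. f k t (u k)" "x k"] assms that by simp
    moreover have "((\<lambda>t. x k + t * h k) has_real_derivative h k) (at 0)"
      by (auto intro!: derivative_eq_intros)
    ultimately show ?thesis
      unfolding Fint_eq_primitive by (rule DERIV_chain2)
  qed
  show ?thesis
    unfolding Jfun_def Jfun_deriv_def
    by (intro DERIV_add DERIV_diff DERIV_sum quadratic potential)
       (auto intro!: derivative_eq_intros)
qed

lemma Jfun_zero [simp]: "Jfun T p f g u (\<lambda>_. 0) = 0"
  by (simp add: Jfun_def Fint_eq_primitive)

lemma Jfun_deriv_eq_0_at_minimizer:
  assumes "\<forall>k\<in>{1..T}. continuous_on UNIV (\<lambda>t. f k t (u k))"
    and x: "x \<in> Espace T" and min: "\<forall>v\<in>Espace T. Jfun T p f g u x \<le> Jfun T p f g u v"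
    and h: "h \<in> Espace T"
  shows "Jfun_deriv T p f g u x h = 0"
proof (rule DERIV_local_min[OF has_real_derivative_Jfun_line[where T=T and f=f and u=u, OF assms(1)],
      of 1])
  have "(\<lambda>k. x k + t * h k) \<in> Espace T" for t using x h by (simp add: Espace_def)
  then show "\<forall>t. \<bar>0 - t\<bar> < 1 \<longrightarrow>
      Jfun T p f g u (\<lambda>k. x k + 0 * h k) \<le> Jfun T p f g u (\<lambda>k. x k + t * h k)"
    using min by simp
qed simp

lemma minimizer_in_Vset:
  assumes "\<forall>k\<in>{1..T}. continuous_on UNIV (\<lambda>t. f k t (u k))"
    and "x \<in> Espace T" and "\<forall>v\<in>Espace T. Jfun T p f g u x \<le> Jfun T p f g u v"
  shows "x \<in> Vset T p f g u"
proof -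
  have "((\<lambda>t. Jfun T p f g u (\<lambda>k. x k + t * h k)) has_real_derivative 0) (at 0)"
    if "h \<in> Espace T" for h
    using has_real_derivative_Jfun_line[where T=T and f=f and u=u and p=p and g=g and x=x and h=h,
        OF assms(1)]
      Jfun_deriv_eq_0_at_minimizer[OF assms that]
    by simp
  then show ?thesis using assms(2,3) by (simp add: Vset_def)
qed

lemma Jfun_deriv_unit_vector:
  assumes k: "k \<in> {1..T}"
  shows "Jfun_deriv T p f g u x (\<lambda>j. if j = k then 1 else 0) =
     p k * (x k - x (k - 1)) - p (k + 1) * (x (k + 1) - x k) - f k (x k) (u k) + g k"
proof -
  have "(\<Sum>j=1..T+1. p j * (x j - x (j - 1))
                      * ((if j = k then 1 else 0) - (if j - 1 = k then 1 else 0)))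
      = (\<Sum>j=1..T+1. (if j = k then p j * (x j - x (j - 1)) else 0)
                   - (if j = k + 1 then p j * (x j - x (j - 1)) else 0))" (is "?D = _")
    by (rule sum.cong) auto
  also have "\<dots> = p k * (x k - x (k - 1)) - p (k + 1) * (x (k + 1) - x k)"
    using k by (simp only: sum_subtractf sum.delta') simp
  finally have "?D = p k * (x k - x (k - 1)) - p (k + 1) * (x (k + 1) - x k)" .
  moreover have "(\<Sum>j=1..T. f j (x j) (u j) * (if j = k then 1 else 0)) = f k (x k) (u k)"
    using k by (simp add: if_distrib cong: if_cong)
  moreover have "(\<Sum>j=1..T. g j * (if j = k then 1 else 0)) = g k"
    using k by (simp add: if_distrib cong: if_cong)
  ultimately show ?thesis by (simp add: Jfun_deriv_def)
qed

lemma minimizer_solvesP: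
  assumes "\<forall>k\<in>{1..T}. continuous_on UNIV (\<lambda>t. f k t (u k))"
    and "x \<in> Espace T" and "\<forall>v\<in>Espace T. Jfun T p f g u x \<le> Jfun T p f g u v"
  shows "solvesP T p f g u x"
  unfolding solvesP_def
proof (intro conjI ballI \<open>x \<in> Espace T\<close>)
  fix k assume k: "k \<in> {1..T}"
  then have "(\<lambda>j. if j = k then 1 else 0) \<in> Espace T" by (auto simp: Espace_def)
  from Jfun_deriv_eq_0_at_minimizer[OF assms this] Jfun_deriv_unit_vector[OF k]
  show "p (k + 1) * (x (k + 1) - x k) - p k * (x k - x (k - 1)) + f k (x k) (u k) = g k"
    by simp
qed

section \<open>Discrete strong minimum principle\<close>

lemma propagate_along_interval:
  fixes P :: "nat \<Rightarrow> bool" and i N :: nat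
  assumes i: "0 < i" "i < N" "P i"
    and neighbours: "\<And>j. 0 < j \<Longrightarrow> j < N \<Longrightarrow> P j \<Longrightarrow> P (j - 1) \<and> P (j + 1)"
    and "j \<le> N"
  shows "P j"
proof (cases "i \<le> j")
  case True
  then show ?thesis
  proof (induction rule: dec_induct)
    case (step n)
    then show ?case using neighbours[of n] i \<open>j \<le> N\<close> by simp
  qed (rule i)
next
  case False
  then have "j \<le> i" by simp
  then show ?thesis
  proof (induction rule: inc_induct)
    case (step n)
    then show ?case using neighbours[of "Suc n"] i by simp
  qed (rule i)
qed

lemma discrete_strong_minimum_principle:
  fixes p x :: "nat \<Rightarrow> real"
  assumes p: "\<forall>k\<in>{1..T+1}. 0 < p k"
    and superharmonic: "\<forall>k\<in>{1..T}. p (k + 1) * (x (k + 1) - x k) - p k * (x k - x (k - 1)) \<le> 0"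
    and i: "i \<in> {1..T}" and min: "\<forall>j\<le>T+1. x i \<le> x j"
    and "j \<le> T + 1"
  shows "x j = x i"
proof (rule propagate_along_interval[where P="\<lambda>j. x j = x i"])
  fix j assume j: "0 < j" "j < T + 1" and "x j = x i"
  have "0 \<le> x (j + 1) - x j" "0 \<le> x (j - 1) - x j" using min j \<open>x j = x i\<close> by auto
  moreover have pj: "0 < p (j + 1)" "0 < p j" using p j by auto
  ultimately have "0 \<le> p (j + 1) * (x (j + 1) - x j)" "0 \<le> p j * (x (j - 1) - x j)" by simp_all
  moreover have "p (j + 1) * (x (j + 1) - x j) + p j * (x (j - 1) - x j) \<le> 0"
    using superharmonic j by (force simp: algebra_simps)
  ultimately have "p (j + 1) * (x (j + 1) - x j) = 0" "p j * (x (j - 1) - x j) = 0"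
    by linarith+
  then show "x (j - 1) = x i \<and> x (j + 1) = x i"
    using pj \<open>x j = x i\<close> by simp
qed (use i \<open>j \<le> T + 1\<close> in auto)

lemma solvesP_positive:
  assumes s: "solvesP T p f g u x" and p: "\<forall>k\<in>{1..T+1}. 0 < p k"
    and ge: "\<forall>k\<in>{1..T}. g k \<le> f k (x k) (u k)"
    and k1: "k1 \<in> {1..T}" and gt: "g k1 < f k1 (x k1) (u k1)"
  shows "\<forall>k\<in>{1..T}. 0 < x k"
proof (rule ccontr)
  assume "\<not> (\<forall>k\<in>{1..T}. 0 < x k)"
  then obtain k0 where k0: "k0 \<in> {1..T}" "x k0 \<le> 0" by force
  have boundary: "x 0 = 0" "x (T + 1) = 0" using s by (auto simp: solvesP_def Espace_def)
  have eq: "p (k + 1) * (x (k + 1) - x k) - p k * (x k - x (k - 1)) + f k (x k) (u k) = g k"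
    if "k \<in> {1..T}" for k using s that by (auto simp: solvesP_def)
  have superharmonic: "\<forall>k\<in>{1..T}. p (k + 1) * (x (k + 1) - x k) - p k * (x k - x (k - 1)) \<le> 0"
    using eq ge by force
  obtain i where "i \<le> T + 1" and i_min: "\<forall>j\<le>T+1. x i \<le> x j"
    using ex_min_if_finite[of "x ` {..T+1}"] by (fastforce simp: not_less)
  obtain i' where i': "i' \<in> {1..T}" and i'_min: "\<forall>j\<le>T+1. x i' \<le> x j"
  proof (cases "i \<in> {1..T}")
    case False
    then have "i = 0 \<or> i = T + 1" using \<open>i \<le> T + 1\<close> by auto
    then have "x i = 0" using boundary by auto
    then show ?thesis using that[OF k0(1)] i_min k0 by force
  qed (use that i_min in blast)
  have zero: "x j = 0" if "j \<le> T + 1" for j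
    using discrete_strong_minimum_principle[OF p superharmonic i' i'_min] that boundary by force
  then have "x (k1 - 1) = 0" "x k1 = 0" "x (k1 + 1) = 0" using k1 by auto
  then show False using eq[OF k1] gt by simp
qed

lemma minimizer_positive_solution:
  assumes A1: "\<forall>k \<in> {1..T}. continuous_on (UNIV \<times> {-M..M}) (\<lambda>(y, u). f k y u)"
    and p: "\<forall>k\<in>{1..T+1}. 0 < p k"
    and A5: "\<forall>k \<in> {1..T}. \<forall>y u. \<bar>u\<bar> \<le> M \<longrightarrow> f k y u - g k \<ge> 0"
    and A5': "\<exists>k1 \<in> {1..T}. \<forall>y u. \<bar>u\<bar> \<le> M \<longrightarrow> f k1 y u - g k1 > 0"
    and u: "\<forall>k\<in>{1..T}. u k \<in> {-M..M}"
    and x: "x \<in> Espace T" and min: "\<forall>y\<in>Espace T. Jfun T p f g u x \<le> Jfun T p f g u y"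
  shows "x \<in> Vset T p f g u \<and> solvesP T p f g u x \<and> (\<forall>k\<in>{1..T}. 0 < x k)"
proof -
  have slices: "\<forall>k\<in>{1..T}. continuous_on UNIV (\<lambda>t. f k t (u k))"
    using A1 u by (blast intro: continuous_on_slice)
  have u_abs: "\<forall>k\<in>{1..T}. \<bar>u k\<bar> \<le> M" using u by (auto simp: abs_le_iff)
  obtain k1 where "k1 \<in> {1..T}" "g k1 < f k1 (x k1) (u k1)" using A5' u_abs by force
  moreover have "solvesP T p f g u x" by (rule minimizer_solvesP[OF slices x min])
  moreover have "\<forall>k\<in>{1..T}. g k \<le> f k (x k) (u k)" using A5 u_abs by force
  ultimately show ?thesis
    using minimizer_in_Vset[OF slices x min] solvesP_positive[OF _ p] by blast
qed

section \<open>Coercivity\<close>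

lemma sq_le_mult_sum_sq_diffs:
  fixes y :: "nat \<Rightarrow> real"
  assumes "y 0 = 0"
  shows "(y k)\<^sup>2 \<le> k * (\<Sum>i<k. (y (i + 1) - y i)\<^sup>2)"
proof -
  have "y k = (\<Sum>i<k. 1 * (y (Suc i) - y i))"
    using sum_Suc_diff'[of 0 k y] assms by (simp add: atLeast0LessThan)
  then show ?thesis
    using Cauchy_Schwarz_ineq_sum[of "\<lambda>_. 1" "\<lambda>i. y (Suc i) - y i" "{..<k}"] by simp
qed

lemma le_of_quadratic_bound:
  fixes N :: real
  assumes "0 < c" "0 \<le> A" "0 \<le> B" and quadratic: "c * N\<^sup>2 \<le> A + B * N"
  shows "N \<le> 1 + (A + B) / c"
proof (cases "N \<le> 1")
  case False
  have "A * 1 \<le> A * N" using False \<open>0 \<le> A\<close> by (intro mult_left_mono) auto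
  then have "c * N * N \<le> (A + B) * N"
    using quadratic by (simp add: power2_eq_square algebra_simps)
  then have "c * N \<le> A + B" using False by simp
  then show ?thesis using \<open>0 < c\<close> by (simp add: field_simps)
next
  case True
  moreover have "0 \<le> (A + B) / c" using assms by simp
  ultimately show ?thesis by linarith
qed

lemma abs_le_normC: "k \<in> {1..T} \<Longrightarrow> \<bar>v k\<bar> \<le> normC T v"
  unfolding normC_def by (intro Max_ge) auto

lemma Jfun_sublevel_bound:
  assumes "0 < m" and m: "\<forall>k\<in>{1..T+1}. m \<le> p k" and "0 \<le> a" "0 \<le> b"
    and growth: "\<forall>k\<in>{1..T}. Fint f k (y k) (u k) - g k * y k \<le> a + b * \<bar>y k\<bar>"
    and "y 0 = 0" and J: "Jfun T p f g u y \<le> 0" and k: "k \<in> {1..T}"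
  shows "\<bar>y k\<bar> \<le> 1 + 2 * T\<^sup>2 * (a + b) / m"
proof -
  define S where "S = (\<Sum>i=0..T. (y (i + 1) - y i)\<^sup>2)"
  define N where "N = normC T y"
  have "m / 2 * S = (\<Sum>i=0..T. m / 2 * (y (i + 1) - y i)\<^sup>2)"
    by (simp add: S_def sum_distrib_left)
  also have "\<dots> \<le> (\<Sum>i=0..T. p (i + 1) / 2 * (y (i + 1) - y i)\<^sup>2)"
    using m by (intro sum_mono mult_right_mono) auto
  also have "\<dots> = (\<Sum>k=1..T+1. p k / 2 * (y k - y (k - 1))\<^sup>2)"
    using sum.shift_bounds_cl_nat_ivl[of "\<lambda>k. p k / 2 * (y k - y (k - 1))\<^sup>2" 0 1 T] by simp
  also have "\<dots> \<le> (\<Sum>k=1..T. Fint f k (y k) (u k) - g k * y k)"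
    using J by (simp add: Jfun_def sum_subtractf)
  also have "\<dots> \<le> (\<Sum>k=1..T. a + b * N)"
  proof (rule sum_mono)
    fix k assume "k \<in> {1..T}"
    moreover have "b * \<bar>y k\<bar> \<le> b * N"
      unfolding N_def using abs_le_normC[OF \<open>k \<in> {1..T}\<close>] \<open>0 \<le> b\<close> by (rule mult_left_mono)
    ultimately show "Fint f k (y k) (u k) - g k * y k \<le> a + b * N" using growth by force
  qed
  finally have energy: "m / 2 * S \<le> T * (a + b * N)" by simp
  obtain k0 where k0: "k0 \<in> {1..T}" and "N = \<bar>y k0\<bar>"
    using Max_in[of "(\<lambda>k. \<bar>y k\<bar>) ` {1..T}"] k unfolding N_def normC_def by fastforce
  then have "N\<^sup>2 \<le> k0 * (\<Sum>i<k0. (y (i + 1) - y i)\<^sup>2)"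
    using sq_le_mult_sum_sq_diffs[of y k0] \<open>y 0 = 0\<close> by simp
  also have "\<dots> \<le> T * S"
    unfolding S_def using k0 by (intro mult_mono sum_mono2 sum_nonneg) auto
  finally have "m * N\<^sup>2 \<le> 2 * T * (m / 2 * S)" using \<open>0 < m\<close> by simp
  also have "\<dots> \<le> 2 * T * (T * (a + b * N))" using energy by (intro mult_left_mono) auto
  finally have "m * N\<^sup>2 \<le> 2 * T\<^sup>2 * a + 2 * T\<^sup>2 * b * N"
    by (simp add: power2_eq_square algebra_simps)
  then have "N \<le> 1 + (2 * T\<^sup>2 * a + 2 * T\<^sup>2 * b) / m"
    by (intro le_of_quadratic_bound) (use assms in auto)
  then show ?thesis
    using abs_le_normC[OF k, of y] unfolding N_def by (simp add: algebra_simps)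
qed

lemma Jfun_sublevel_uniformly_bounded:
  assumes A3: "Min (p ` {1..T+1}) > 0"
    and A1: "\<forall>k \<in> {1..T}. continuous_on (UNIV \<times> {-M..M}) (\<lambda>(y, u). f k y u)"
    and A5: "\<forall>k \<in> {1..T}. \<forall>y u. \<bar>u\<bar> \<le> M \<longrightarrow> f k y u - g k \<ge> 0"
    and A2_or_A6:
      "(\<exists>\<alpha>>0. \<forall>k \<in> {1..T}. \<forall>y u. \<bar>y\<bar> \<ge> \<alpha> \<and> \<bar>u\<bar> \<le> M \<longrightarrow> y * f k y u \<le> 0)
       \<or> ((\<forall>B. \<exists>Y. \<forall>y \<ge> Y. \<forall>u. \<bar>u\<bar> \<le> M \<longrightarrow> (\<Sum>k=1..T. Fint f k y u) \<le> B)
          \<and> (\<exists>c. \<forall>\<epsilon>>0. \<exists>Y. \<forall>y \<le> Y. \<forall>u. \<bar>u\<bar> \<le> M \<longrightarrow>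
                 \<bar>(\<Sum>k=1..T. Fint f k y u) - c\<bar> < \<epsilon>))"
  obtains R where "\<forall>u y. (\<forall>k\<in>{1..T}. u k \<in> {-M..M}) \<and> y \<in> Espace T \<and> Jfun T p f g u y \<le> 0
      \<longrightarrow> (\<forall>k\<in>{1..T}. \<bar>y k\<bar> \<le> R)"
proof -
  obtain a b where "0 \<le> a" "0 \<le> b"
    and growth: "\<forall>k\<in>{1..T}. \<forall>u\<in>{-M..M}. \<forall>y. Fint f k y u - g k * y \<le> a + b * \<bar>y\<bar>"
    using Fint_minus_linear_growth[OF A1 A5 A2_or_A6] by blast
  define m where "m = Min (p ` {1..T+1})"
  have "0 < m" and m_le: "\<forall>k\<in>{1..T+1}. m \<le> p k" using A3 unfolding m_def by simp_all
  show ?thesis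
  proof (rule that, intro allI impI ballI)
    fix u y k
    assume "(\<forall>k\<in>{1..T}. u k \<in> {-M..M}) \<and> y \<in> Espace T \<and> Jfun T p f g u y \<le> 0"
      and "k \<in> {1..T}"
    then show "\<bar>y k\<bar> \<le> 1 + 2 * T\<^sup>2 * (a + b) / m"
      using growth by (intro Jfun_sublevel_bound[OF \<open>0 < m\<close> m_le \<open>0 \<le> a\<close> \<open>0 \<le> b\<close>])
        (auto simp: Espace_def)
  qed
qed

section \<open>Compactness and continuity\<close>

definition Ebox :: "nat \<Rightarrow> real \<Rightarrow> (nat \<Rightarrow> real) set" where
  "Ebox T R = PiE UNIV (\<lambda>k. if k \<in> {1..T} then {-R..R} else {0})"

text \<open>Elements of E are arbitrary beyond T+1, so they are truncated to 0 there before the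
  compactness of the box is used.\<close>
definition truncE :: "nat \<Rightarrow> (nat \<Rightarrow> real) \<Rightarrow> nat \<Rightarrow> real" where
  "truncE T y k = (if k \<in> {1..T} then y k else 0)"

lemma compact_Ebox: "compact (Ebox T R)"
proof -
  have "compactin (product_topology (\<lambda>_. euclidean) UNIV) (Ebox T R)"
    unfolding Ebox_def by (subst compactin_PiE) auto
  then show ?thesis by (simp add: euclidean_product_topology)
qed

lemma Ebox_subset_Espace: "Ebox T R \<subseteq> Espace T"
proof
  fix y assume "y \<in> Ebox T R"
  then have "\<forall>k. y k \<in> (if k \<in> {1..T} then {-R..R} else {0})" by (simp add: Ebox_def PiE_iff)
  from this[rule_format, of 0] this[rule_format, of "T + 1"] show "y \<in> Espace T"
    by (simp add: Espace_def)
qed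

lemma truncE_in_Ebox:
  assumes "\<forall>k\<in>{1..T}. \<bar>y k\<bar> \<le> R"
  shows "truncE T y \<in> Ebox T R"
proof -
  have "y k \<in> {-R..R}" if "k \<in> {1..T}" for k using assms that by (force simp: abs_le_iff)
  then show ?thesis by (simp add: Ebox_def truncE_def PiE_iff)
qed

lemma truncE_eq: "y \<in> Espace T \<Longrightarrow> k \<le> T + 1 \<Longrightarrow> truncE T y k = y k"
  unfolding truncE_def Espace_def by (cases "k = 0") (auto simp: le_Suc_eq)

lemma Jfun_truncE: "y \<in> Espace T \<Longrightarrow> Jfun T p f g u (truncE T y) = Jfun T p f g u y"
  unfolding Jfun_def using truncE_eq[of y T]
  by (intro arg_cong2[where f="(+)"] arg_cong2[where f="(-)"] sum.cong) auto

lemma tendsto_apply: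
  fixes X :: "'a \<Rightarrow> 'b \<Rightarrow> 'c::topological_space"
  assumes "(X \<longlongrightarrow> x) F"
  shows "((\<lambda>n. X n k) \<longlongrightarrow> x k) F"
  using continuous_on_tendsto_compose[OF continuous_on_product_coordinates assms] by simp

lemma tendsto_Jfun:
  assumes A1: "\<forall>k \<in> {1..T}. continuous_on (UNIV \<times> U) (\<lambda>(y, u). f k y u)" and "compact U"
    and xs: "\<forall>k \<le> T + 1. (\<lambda>n. xs n k) \<longlonglongrightarrow> x k"
    and us: "\<forall>k\<in>{1..T}. (\<lambda>n. us n k) \<longlonglongrightarrow> u k"
    and "\<forall>n. \<forall>k\<in>{1..T}. us n k \<in> U" and "\<forall>k\<in>{1..T}. u k \<in> U"
  shows "(\<lambda>n. Jfun T p f g (us n) (xs n)) \<longlonglongrightarrow> Jfun T p f g u x"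
  unfolding Jfun_def Fint_eq_primitive
proof (intro tendsto_intros)
  fix k assume "k \<in> {1..T}"
  then show "(\<lambda>n. primitive (\<lambda>t. f k t (us n k)) (xs n k)) \<longlonglongrightarrow> primitive (\<lambda>t. f k t (u k)) (x k)"
    using assms by (intro primitive_tendsto[where f="f k" and U=U]) auto
qed (use xs in auto)

lemma Jfun_has_minimizer:
  assumes A1: "\<forall>k \<in> {1..T}. continuous_on (UNIV \<times> U) (\<lambda>(y, u). f k y u)" and "compact U"
    and u: "\<forall>k\<in>{1..T}. u k \<in> U"
    and bounded: "\<And>y. y \<in> Espace T \<Longrightarrow> Jfun T p f g u y \<le> 0 \<Longrightarrow> \<forall>k\<in>{1..T}. \<bar>y k\<bar> \<le> R"
  shows "\<exists>x\<in>Espace T. \<forall>y\<in>Espace T. Jfun T p f g u x \<le> Jfun T p f g u y"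
proof -
  have "\<forall>k\<in>{1..T}. \<bar>0\<bar> \<le> R" using bounded[of "\<lambda>_. 0"] by (simp add: Espace_def)
  then have "(\<lambda>_. 0) \<in> Ebox T R" by (auto simp: Ebox_def PiE_iff)
  moreover have "continuous_on (Ebox T R) (Jfun T p f g u)"
  proof (rule continuous_on_sequentiallyI)
    fix ys :: "nat \<Rightarrow> nat \<Rightarrow> real" and y assume lim: "ys \<longlonglongrightarrow> y"
    show "(\<lambda>n. Jfun T p f g u (ys n)) \<longlonglongrightarrow> Jfun T p f g u y"
      by (rule tendsto_Jfun[OF A1 \<open>compact U\<close>]) (use tendsto_apply[OF lim] u in auto)
  qed
  ultimately obtain x where x: "x \<in> Ebox T R"
    and min: "\<forall>y\<in>Ebox T R. Jfun T p f g u x \<le> Jfun T p f g u y"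
    using continuous_attains_inf[OF compact_Ebox] by blast
  have "Jfun T p f g u x \<le> Jfun T p f g u y" if y: "y \<in> Espace T" for y
  proof (cases "Jfun T p f g u y \<le> 0")
    case True
    then have "truncE T y \<in> Ebox T R" using bounded[OF y] by (intro truncE_in_Ebox) auto
    then show ?thesis using min Jfun_truncE[OF y] by force
  next
    case False
    then show ?thesis using min \<open>(\<lambda>_. 0) \<in> Ebox T R\<close> by force
  qed
  then show ?thesis using x Ebox_subset_Espace by blast
qed

lemma minimizers_convergent_subsequence:
  assumes A1: "\<forall>k \<in> {1..T}. continuous_on (UNIV \<times> U) (\<lambda>(y, u). f k y u)" and "compact U"
    and us: "\<forall>n. \<forall>k\<in>{1..T}. us n k \<in> U" and ubar: "\<forall>k\<in>{1..T}. ubar k \<in> U"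
    and conv: "\<forall>k\<in>{1..T}. (\<lambda>n. us n k) \<longlonglongrightarrow> ubar k"
    and xs: "\<forall>n. xs n \<in> Espace T"
    and min: "\<forall>n. \<forall>y\<in>Espace T. Jfun T p f g (us n) (xs n) \<le> Jfun T p f g (us n) y"
    and bounded: "\<forall>n. \<forall>k\<in>{1..T}. \<bar>xs n k\<bar> \<le> R"
  shows "\<exists>r xbar. strict_mono r \<and> xbar \<in> Espace T \<and> (\<forall>k\<le>T+1. (\<lambda>i. xs (r i) k) \<longlonglongrightarrow> xbar k)
           \<and> (\<forall>y\<in>Espace T. Jfun T p f g ubar xbar \<le> Jfun T p f g ubar y)"
proof -
  have "\<forall>n. truncE T (xs n) \<in> Ebox T R" using bounded truncE_in_Ebox by blast
  with compact_Ebox[THEN compact_imp_seq_compact] obtain xbar r where "xbar \<in> Ebox T R"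
    and "strict_mono r" and trunc_lim: "((\<lambda>n. truncE T (xs n)) \<circ> r) \<longlonglongrightarrow> xbar"
    by (rule seq_compactE)
  then have xbar: "xbar \<in> Espace T" using Ebox_subset_Espace by blast
  have lim: "\<forall>k\<le>T+1. (\<lambda>i. xs (r i) k) \<longlonglongrightarrow> xbar k"
  proof (intro allI impI)
    fix k assume "k \<le> T + 1"
    then show "(\<lambda>i. xs (r i) k) \<longlonglongrightarrow> xbar k"
      using tendsto_apply[OF trunc_lim, of k] truncE_eq[of "xs _" T k] xs by (simp add: o_def)
  qed
  have "Jfun T p f g ubar xbar \<le> Jfun T p f g ubar y" if "y \<in> Espace T" for y
  proof (rule LIMSEQ_le)
    have "\<forall>k\<in>{1..T}. (\<lambda>i. us (r i) k) \<longlonglongrightarrow> ubar k"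
      using conv LIMSEQ_subseq_LIMSEQ[OF _ \<open>strict_mono r\<close>] by (auto simp: o_def)
    note tendsto = tendsto_Jfun[OF A1 \<open>compact U\<close> _ this _ ubar]
    show "(\<lambda>i. Jfun T p f g (us (r i)) (xs (r i))) \<longlonglongrightarrow> Jfun T p f g ubar xbar"
      by (rule tendsto) (use lim us in auto)
    show "(\<lambda>i. Jfun T p f g (us (r i)) y) \<longlonglongrightarrow> Jfun T p f g ubar y"
      by (rule tendsto) (use us in auto)
    show "\<exists>N. \<forall>i\<ge>N. Jfun T p f g (us (r i)) (xs (r i)) \<le> Jfun T p f g (us (r i)) y"
      using min that by auto
  qed
  then show ?thesis using \<open>strict_mono r\<close> xbar lim by blast
qed

lemma normE_tendsto_0:
  assumes "\<forall>k\<le>T+1. (\<lambda>i. X i k) \<longlonglongrightarrow> x k"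
  shows "(\<lambda>i. normE T (\<lambda>k. X i k - x k)) \<longlonglongrightarrow> 0"
proof -
  have "(\<lambda>i. \<Sum>k=1..T. ((X i (k + 1) - x (k + 1)) - (X i k - x k))\<^sup>2)
      \<longlonglongrightarrow> (\<Sum>k=1..T. ((x (k + 1) - x (k + 1)) - (x k - x k))\<^sup>2)"
    using assms by (intro tendsto_intros) auto
  from tendsto_real_sqrt[OF this] show ?thesis by (simp add: normE_def)
qed

lemma tendsto_of_normC_diff:
  assumes "(\<lambda>n. normC T (\<lambda>k. X n k - x k)) \<longlonglongrightarrow> 0" and "k \<in> {1..T}"
  shows "(\<lambda>n. X n k) \<longlonglongrightarrow> x k"
proof -
  have "(\<lambda>n. X n k - x k) \<longlonglongrightarrow> 0"
  proof (rule Lim_null_comparison)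
    show "\<forall>\<^sub>F n in sequentially. norm (X n k - x k) \<le> normC T (\<lambda>k. X n k - x k)"
      using abs_le_normC[OF assms(2)] by (intro always_eventually) auto
  qed (rule assms(1))
  then show ?thesis by (rule LIM_zero_cancel)
qed

lemma LM_bound: "u \<in> LM T M \<Longrightarrow> k \<in> {1..T} \<Longrightarrow> u k \<in> {-M..M}"
  using abs_le_normC[of k T u] by (auto simp: LM_def abs_le_iff)

lemma exists_positive_minimizing_solution:
  assumes A1: "\<forall>k \<in> {1..T}. continuous_on (UNIV \<times> {-M..M}) (\<lambda>(y, u). f k y u)"
    and p: "\<forall>k\<in>{1..T+1}. 0 < p k"
    and A5: "\<forall>k \<in> {1..T}. \<forall>y u. \<bar>u\<bar> \<le> M \<longrightarrow> f k y u - g k \<ge> 0"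
    and A5': "\<exists>k1 \<in> {1..T}. \<forall>y u. \<bar>u\<bar> \<le> M \<longrightarrow> f k1 y u - g k1 > 0"
    and R: "\<forall>u y. (\<forall>k\<in>{1..T}. u k \<in> {-M..M}) \<and> y \<in> Espace T \<and> Jfun T p f g u y \<le> 0
      \<longrightarrow> (\<forall>k\<in>{1..T}. \<bar>y k\<bar> \<le> R)"
    and "u \<in> LM T M"
  shows "\<exists>x \<in> Vset T p f g u. solvesP T p f g u x \<and> (\<forall>k \<in> {1..T}. x k > 0)
           \<and> (\<forall>y \<in> Espace T. Jfun T p f g u x \<le> Jfun T p f g u y)"
proof -
  have u: "\<forall>k\<in>{1..T}. u k \<in> {-M..M}" using LM_bound \<open>u \<in> LM T M\<close> by blast
  then obtain x where "x \<in> Espace T" "\<forall>y\<in>Espace T. Jfun T p f g u x \<le> Jfun T p f g u y"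
    using Jfun_has_minimizer[OF A1 compact_Icc u, where R=R] R u by blast
  then show ?thesis using minimizer_positive_solution[OF A1 p A5 A5' u] by blast
qed

lemma minimizers_subsequence_converges_to_positive_solution:
  assumes A1: "\<forall>k \<in> {1..T}. continuous_on (UNIV \<times> {-M..M}) (\<lambda>(y, u). f k y u)"
    and p: "\<forall>k\<in>{1..T+1}. 0 < p k"
    and A5: "\<forall>k \<in> {1..T}. \<forall>y u. \<bar>u\<bar> \<le> M \<longrightarrow> f k y u - g k \<ge> 0"
    and A5': "\<exists>k1 \<in> {1..T}. \<forall>y u. \<bar>u\<bar> \<le> M \<longrightarrow> f k1 y u - g k1 > 0"
    and R: "\<forall>u y. (\<forall>k\<in>{1..T}. u k \<in> {-M..M}) \<and> y \<in> Espace T \<and> Jfun T p f g u y \<le> 0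
      \<longrightarrow> (\<forall>k\<in>{1..T}. \<bar>y k\<bar> \<le> R)"
    and "\<forall>n. us n \<in> LM T M" and "ubar \<in> LM T M"
    and conv: "(\<lambda>n. normC T (\<lambda>k. us n k - ubar k)) \<longlonglongrightarrow> 0"
    and V: "\<forall>n. xs n \<in> Vset T p f g (us n)"
  shows "\<exists>r xbar. strict_mono r \<and> xbar \<in> Espace T
           \<and> (\<lambda>i. normE T (\<lambda>k. xs (r i) k - xbar k)) \<longlonglongrightarrow> 0
           \<and> (\<forall>y \<in> Espace T. Jfun T p f g ubar xbar \<le> Jfun T p f g ubar y)
           \<and> (\<forall>k \<in> {1..T}. xbar k > 0)
           \<and> solvesP T p f g ubar xbar"
proof -
  have us: "\<forall>n. \<forall>k\<in>{1..T}. us n k \<in> {-M..M}" and ubar: "\<forall>k\<in>{1..T}. ubar k \<in> {-M..M}"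
    using LM_bound assms(6,7) by blast+
  have xs: "\<forall>n. xs n \<in> Espace T"
    and min: "\<forall>n. \<forall>y\<in>Espace T. Jfun T p f g (us n) (xs n) \<le> Jfun T p f g (us n) y"
    using V by (simp_all add: Vset_def)
  have "(\<lambda>_. 0) \<in> Espace T" by (simp add: Espace_def)
  then have "Jfun T p f g (us n) (xs n) \<le> 0" for n using min Jfun_zero by metis
  then have "\<forall>n. \<forall>k\<in>{1..T}. \<bar>xs n k\<bar> \<le> R" using R us xs by blast
  moreover have "\<forall>k\<in>{1..T}. (\<lambda>n. us n k) \<longlonglongrightarrow> ubar k" using conv tendsto_of_normC_diff by blast
  ultimately obtain r xbar where "strict_mono r" "xbar \<in> Espace T"
    and lim: "\<forall>k\<le>T+1. (\<lambda>i. xs (r i) k) \<longlonglongrightarrow> xbar k"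
    and "\<forall>y\<in>Espace T. Jfun T p f g ubar xbar \<le> Jfun T p f g ubar y"
    using minimizers_convergent_subsequence[OF A1 compact_Icc us ubar _ xs min] by blast
  then show ?thesis
    using minimizer_positive_solution[OF A1 p A5 A5' ubar] normE_tendsto_0[OF lim] by blast
qed

theorem corollary1:
  fixes T :: nat and M :: real
    and p g :: "nat \<Rightarrow> real" and f :: "nat \<Rightarrow> real \<Rightarrow> real \<Rightarrow> real"
  assumes T: "T \<ge> 1" and M: "M > 0"
    and A1: "\<forall>k \<in> {1..T}. continuous_on (UNIV \<times> {-M..M}) (\<lambda>(y, u). f k y u)"
    and A3: "Min (p ` {1..T+1}) > 0"
    and A5: "\<forall>k \<in> {1..T}. \<forall>y u. \<bar>u\<bar> \<le> M \<longrightarrow> f k y u - g k \<ge> 0"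
    and A5': "\<exists>k1 \<in> {1..T}. \<forall>y u. \<bar>u\<bar> \<le> M \<longrightarrow> f k1 y u - g k1 > 0"
    and A2_or_A6:
      "(\<exists>\<alpha>>0. \<forall>k \<in> {1..T}. \<forall>y u. \<bar>y\<bar> \<ge> \<alpha> \<and> \<bar>u\<bar> \<le> M \<longrightarrow> y * f k y u \<le> 0)
       \<or> ((\<forall>B. \<exists>Y. \<forall>y \<ge> Y. \<forall>u. \<bar>u\<bar> \<le> M \<longrightarrow> (\<Sum>k=1..T. Fint f k y u) \<le> B)
          \<and> (\<exists>c. \<forall>\<epsilon>>0. \<exists>Y. \<forall>y \<le> Y. \<forall>u. \<bar>u\<bar> \<le> M \<longrightarrow>
                 \<bar>(\<Sum>k=1..T. Fint f k y u) - c\<bar> < \<epsilon>))"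
  shows "(\<forall>u \<in> LM T M. \<exists>x \<in> Vset T p f g u. solvesP T p f g u x
             \<and> (\<forall>k \<in> {1..T}. x k > 0)
             \<and> (\<forall>y \<in> Espace T. Jfun T p f g u x \<le> Jfun T p f g u y))
       \<and> (\<forall>us ubar xs.
            (\<forall>n. us n \<in> LM T M) \<and> ubar \<in> LM T M
            \<and> (\<lambda>n. normC T (\<lambda>k. us n k - ubar k)) \<longlonglongrightarrow> 0
            \<and> (\<forall>n. xs n \<in> Vset T p f g (us n) \<and> solvesP T p f g (us n) (xs n)
                   \<and> (\<forall>k \<in> {1..T}. xs n k > 0))
          \<longrightarrow> (\<exists>r xbar. strict_mono r \<and> xbar \<in> Espace T
                 \<and> (\<lambda>i. normE T (\<lambda>k. xs (r i) k - xbar k)) \<longlonglongrightarrow> 0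
                 \<and> (\<forall>y \<in> Espace T. Jfun T p f g ubar xbar \<le> Jfun T p f g ubar y)
                 \<and> (\<forall>k \<in> {1..T}. xbar k > 0)
                 \<and> solvesP T p f g ubar xbar))"
proof -
  obtain R where R: "\<forall>u y. (\<forall>k\<in>{1..T}. u k \<in> {-M..M}) \<and> y \<in> Espace T \<and> Jfun T p f g u y \<le> 0
      \<longrightarrow> (\<forall>k\<in>{1..T}. \<bar>y k\<bar> \<le> R)"
    using Jfun_sublevel_uniformly_bounded[OF A3 A1 A5 A2_or_A6] by blast
  have p: "\<forall>k\<in>{1..T+1}. 0 < p k" using A3 by simp
  show ?thesis
    using exists_positive_minimizing_solution[OF A1 p A5 A5' R]
      minimizers_subsequence_converges_to_positive_solution[OF A1 p A5 A5' R]
    by blast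
qed

end
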